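(* Let $\mathcal{B}$ be a complete topological ring and let $\mathrm{e}\colon\mathcal{B}\to\mathcal{B}\{T\}$ be a restricted exponential homomorphism. Let $S\subseteq\mathcal{B}^{\mathrm{e}}$ be a multiplicatively closed subset, let $\tilde j\colon\mathcal{B}\to\widehat{S^{-1}\mathcal{B}}$ be the separated completed localization homomorphism and let $\tilde j_T\colon\mathcal{B}\{T\}\to\widehat{S^{-1}\mathcal{B}}\{T\}$ be the induced homomorphism $\sum_ib_iT^i\mapsto\sum_i\tilde j(b_i)T^i$. Then there exists a unique restricted exponential homomorphism $\widehat{S^{-1}\mathrm{e}}\colon\widehat{S^{-1}\mathcal{B}}\to\widehat{S^{-1}\mathcal{B}}\{T\}$ such that $\tilde j_T\circ\mathrm{e}=\widehat{S^{-1}\mathrm{e}}\circ\tilde j$.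
   Context: Conventions: topological rings are linearly topologized with a countable fundamental system of open ideals; homomorphisms are continuous; complete means the canonical map to $\varprojlim_{\mathfrak{a}}\mathcal{B}/\mathfrak{a}$ (open ideals, discrete quotients) is a topological isomorphism. For complete $\mathcal{C}$, $\mathcal{C}\{T\}$, $\mathcal{C}\{T,T'\}$ denote restricted power series (coefficients converging to $0$), topologized by the ideals of series with all coefficients in a given open ideal. A restricted exponential homomorphism of a complete ring $\mathcal{C}$ is a continuous ring homomorphism $\mathrm{e}\colon\mathcal{C}\to\mathcal{C}\{T\}$, $\mathrm{e}(c)=\sum_i\mathrm{e}_i(c)T^i$, with $\mathrm{e}_0=\mathrm{id}$ and $\sum_{i,j}\mathrm{e}_j(\mathrm{e}_i(c))T'^jT^i=\sum_\ell\mathrm{e}_\ell(c)(T+T')^\ell$ for all $c$. $\mathcal{B}^{\mathrm{e}}=\{b:\mathrm{e}(b)=b\}$. A multiplicatively closed subset contains $1$ and is stable under multiplication. The separated completed localization $\widehat{S^{-1}\mathcal{B}}$ is the separated completion of $S^{-1}\mathcal{B}$ for the linear topology with fundamental system of ideals $S^{-1}\mathfrak{b}$, $\mathfrak{b}$ open in $\mathcal{B}$, and $\tilde j$ is the composite $\mathcal{B}\to S^{-1}\mathcal{B}\to\widehat{S^{-1}\mathcal{B}}$. *)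

theory Defs
  imports "HOL-Algebra.Algebra"
begin

text \<open>A topological ring is a commutative ring R (HOL-Algebra record) together with a
  decreasing sequence I of ideals forming a fundamental system of open ideals
  (an ideal is open iff it contains some I n).\<close>

definition lin_top_ring :: "('a, 'b) ring_scheme \<Rightarrow> (nat \<Rightarrow> 'a set) \<Rightarrow> bool" where
  "lin_top_ring R I \<longleftrightarrow> cring R \<and> (\<forall>n. ideal (I n) R) \<and> (\<forall>n. I (Suc n) \<subseteq> I n)"

definition top_coset :: "('a, 'b) ring_scheme \<Rightarrow> (nat \<Rightarrow> 'a set) \<Rightarrow> nat \<Rightarrow> 'a \<Rightarrow> 'a set" where
  "top_coset R I n b = {b \<oplus>\<^bsub>R\<^esub> x | x. x \<in> I n}"

text \<open>The inverse limit of the discrete quotients R / I n (compatible families of cosets).\<close>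
definition inv_limit :: "('a, 'b) ring_scheme \<Rightarrow> (nat \<Rightarrow> 'a set) \<Rightarrow> (nat \<Rightarrow> 'a set) set" where
  "inv_limit R I = {x. (\<forall>n. \<exists>b\<in>carrier R. x n = top_coset R I n b) \<and> (\<forall>n. x (Suc n) \<subseteq> x n)}"

definition canon_lim :: "('a, 'b) ring_scheme \<Rightarrow> (nat \<Rightarrow> 'a set) \<Rightarrow> 'a \<Rightarrow> nat \<Rightarrow> 'a set" where
  "canon_lim R I b = (\<lambda>n. top_coset R I n b)"

text \<open>Complete: the canonical map to the inverse limit is bijective (it is then automatically
  a topological isomorphism, since it maps I n onto the kernel of the n-th projection).\<close>
definition complete_ring :: "('a, 'b) ring_scheme \<Rightarrow> (nat \<Rightarrow> 'a set) \<Rightarrow> bool" where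
  "complete_ring R I \<longleftrightarrow> lin_top_ring R I \<and> bij_betw (canon_lim R I) (carrier R) (inv_limit R I)"

definition rser :: "('a, 'b) ring_scheme \<Rightarrow> (nat \<Rightarrow> 'a set) \<Rightarrow> (nat \<Rightarrow> 'a) set" where
  "rser R I = {f. (\<forall>i. f i \<in> carrier R) \<and> (\<forall>n. \<exists>N. \<forall>i\<ge>N. f i \<in> I n)}"

definition ser_mult :: "('a, 'b) ring_scheme \<Rightarrow> (nat \<Rightarrow> 'a) \<Rightarrow> (nat \<Rightarrow> 'a) \<Rightarrow> nat \<Rightarrow> 'a" where
  "ser_mult R f g = (\<lambda>i. finsum R (\<lambda>k. f k \<otimes>\<^bsub>R\<^esub> g (i - k)) {..i})"

text \<open>A map e : R -> R{T}, written e c i = e_i(c).  The cocycle condition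
  sum_{i,j} e_j(e_i(c)) T'^j T^i = sum_l e_l(c) (T+T')^l in R{T,T'} is stated by comparing
  coefficients of T^i T'^j: e_j(e_i(c)) = binom(i+j, i) e_{i+j}(c).
  Continuity (R{T} topologized by series with all coefficients in I n) means: for every n there is
  m with e(I m) contained in the series with all coefficients in I n.\<close>
definition rexp :: "('a, 'b) ring_scheme \<Rightarrow> (nat \<Rightarrow> 'a set) \<Rightarrow> ('a \<Rightarrow> nat \<Rightarrow> 'a) \<Rightarrow> bool" where
  "rexp R I e \<longleftrightarrow>
     complete_ring R I \<and>
     (\<forall>c\<in>carrier R. e c \<in> rser R I) \<and>
     (\<forall>c\<in>carrier R. \<forall>d\<in>carrier R. e (c \<oplus>\<^bsub>R\<^esub> d) = (\<lambda>i. e c i \<oplus>\<^bsub>R\<^esub> e d i)) \<and>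
     (\<forall>c\<in>carrier R. \<forall>d\<in>carrier R. e (c \<otimes>\<^bsub>R\<^esub> d) = ser_mult R (e c) (e d)) \<and>
     e \<one>\<^bsub>R\<^esub> = (\<lambda>i. if i = 0 then \<one>\<^bsub>R\<^esub> else \<zero>\<^bsub>R\<^esub>) \<and>
     (\<forall>n. \<exists>m. \<forall>c\<in>I m. \<forall>i. e c i \<in> I n) \<and>
     (\<forall>c\<in>carrier R. e c 0 = c) \<and>
     (\<forall>c\<in>carrier R. \<forall>i j. e (e c i) j = add_pow R ((i + j) choose i) (e c (i + j)))"

definition fixed_elems :: "('a, 'b) ring_scheme \<Rightarrow> ('a \<Rightarrow> nat \<Rightarrow> 'a) \<Rightarrow> 'a set" where
  "fixed_elems R e = {b \<in> carrier R. e b = (\<lambda>i. if i = 0 then b else \<zero>\<^bsub>R\<^esub>)}"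

text \<open>Elements of S^{-1}R are fractions (a,s), s in S.  Modulo the ideal S^{-1}(I n),
  (a,s) and (b,t) are identified iff u(at - bs) is in I n for some u in S.\<close>
definition loc_rel :: "('a, 'b) ring_scheme \<Rightarrow> (nat \<Rightarrow> 'a set) \<Rightarrow> 'a set \<Rightarrow> nat \<Rightarrow> 'a \<times> 'a \<Rightarrow> 'a \<times> 'a \<Rightarrow> bool" where
  "loc_rel R I S n p q \<longleftrightarrow> p \<in> carrier R \<times> S \<and> q \<in> carrier R \<times> S \<and>
     (\<exists>u\<in>S. u \<otimes>\<^bsub>R\<^esub> (fst p \<otimes>\<^bsub>R\<^esub> snd q \<ominus>\<^bsub>R\<^esub> fst q \<otimes>\<^bsub>R\<^esub> snd p) \<in> I n)"

definition loc_class :: "('a, 'b) ring_scheme \<Rightarrow> (nat \<Rightarrow> 'a set) \<Rightarrow> 'a set \<Rightarrow> nat \<Rightarrow> 'a \<times> 'a \<Rightarrow> ('a \<times> 'a) set" where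
  "loc_class R I S n p = {q. loc_rel R I S n p q}"

definition frac_add :: "('a, 'b) ring_scheme \<Rightarrow> 'a \<times> 'a \<Rightarrow> 'a \<times> 'a \<Rightarrow> 'a \<times> 'a" where
  "frac_add R p q = (fst p \<otimes>\<^bsub>R\<^esub> snd q \<oplus>\<^bsub>R\<^esub> fst q \<otimes>\<^bsub>R\<^esub> snd p, snd p \<otimes>\<^bsub>R\<^esub> snd q)"

definition frac_mult :: "('a, 'b) ring_scheme \<Rightarrow> 'a \<times> 'a \<Rightarrow> 'a \<times> 'a \<Rightarrow> 'a \<times> 'a" where
  "frac_mult R p q = (fst p \<otimes>\<^bsub>R\<^esub> fst q, snd p \<otimes>\<^bsub>R\<^esub> snd q)"

text \<open>The separated completion of S^{-1}R: inverse limit of S^{-1}R / S^{-1}(I n),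
  with levelwise ring operations.\<close>
definition cloc :: "('a, 'b) ring_scheme \<Rightarrow> (nat \<Rightarrow> 'a set) \<Rightarrow> 'a set \<Rightarrow> (nat \<Rightarrow> ('a \<times> 'a) set) ring" where
  "cloc R I S =
    \<lparr>carrier = {x. (\<forall>n. \<exists>p \<in> carrier R \<times> S. x n = loc_class R I S n p) \<and> (\<forall>n. x (Suc n) \<subseteq> x n)},
     monoid.mult = (\<lambda>x y. \<lambda>n. {r. \<exists>p\<in>x n. \<exists>q\<in>y n. loc_rel R I S n (frac_mult R p q) r}),
     monoid.one = (\<lambda>n. loc_class R I S n (\<one>\<^bsub>R\<^esub>, \<one>\<^bsub>R\<^esub>)),
     ring.zero = (\<lambda>n. loc_class R I S n (\<zero>\<^bsub>R\<^esub>, \<one>\<^bsub>R\<^esub>)),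
     ring.add = (\<lambda>x y. \<lambda>n. {r. \<exists>p\<in>x n. \<exists>q\<in>y n. loc_rel R I S n (frac_add R p q) r})\<rparr>"

text \<open>Its fundamental system of open ideals: kernels of the projections to the levels.\<close>
definition cloc_top :: "('a, 'b) ring_scheme \<Rightarrow> (nat \<Rightarrow> 'a set) \<Rightarrow> 'a set \<Rightarrow> nat \<Rightarrow> (nat \<Rightarrow> ('a \<times> 'a) set) set" where
  "cloc_top R I S n = {x \<in> carrier (cloc R I S). x n = \<zero>\<^bsub>cloc R I S\<^esub> n}"

definition cloc_j :: "('a, 'b) ring_scheme \<Rightarrow> (nat \<Rightarrow> 'a set) \<Rightarrow> 'a set \<Rightarrow> 'a \<Rightarrow> nat \<Rightarrow> ('a \<times> 'a) set" where
  "cloc_j R I S b = (\<lambda>n. loc_class R I S n (b, \<one>\<^bsub>R\<^esub>))"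

end

theory Submission
  imports Defs
begin

(* Since the elements of S are constants of e, every e_i is S-linear, so it maps a witness
   u (a t - b s) in I (M n) of (a, s) ~ (b, t) at level M n, where M is a modulus of continuity
   of e, to the witness u (e_i(a) t - e_i(b) s) in I n.  Hence e_i(a)/s, read off a
   representative at level M n, is well defined at level n, and the axioms of a restricted
   exponential can be checked on representatives.  For uniqueness, a continuous extension E is
   determined at level n by the level-m class of its argument, and every element agrees at
   level m with some j(a) j(s)^{-1}; as j(s) is an invertible constant of E, multiplicativity
   forces E(j(a) j(s)^{-1}) = j(e(a)) j(s)^{-1}. *)

section \<open>Restricted exponential homomorphisms\<close>

lemma (in cring) ser_mult_const_left:
  assumes "u \<in> carrier R" "\<And>k. f k \<in> carrier R"
  shows "ser_mult R (\<lambda>k. if k = 0 then u else \<zero>) f i = u \<otimes> f i"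
proof -
  have "ser_mult R (\<lambda>k. if k = 0 then u else \<zero>) f i
      = (\<Oplus>k\<in>{..i}. if 0 = k then u \<otimes> f (i - k) else \<zero>)"
    unfolding ser_mult_def using assms by (intro finsum_cong') auto
  also have "\<dots> = u \<otimes> f i"
    using assms by (subst finsum_singleton) auto
  finally show ?thesis .
qed

lemma (in cring) ser_mult_const_right:
  assumes "u \<in> carrier R" "\<And>k. f k \<in> carrier R"
  shows "ser_mult R f (\<lambda>k. if k = 0 then u else \<zero>) i = f i \<otimes> u"
proof -
  have "ser_mult R f (\<lambda>k. if k = 0 then u else \<zero>) i
      = (\<Oplus>k\<in>{..i}. if i = k then f k \<otimes> u else \<zero>)"
    unfolding ser_mult_def using assms by (intro finsum_cong') (auto intro: le_antisym)
  also have "\<dots> = f i \<otimes> u"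
    using assms by (subst finsum_singleton) auto
  finally show ?thesis .
qed

locale restricted_exp =
  fixes R :: "('a, 'b) ring_scheme" (structure) and I :: "nat \<Rightarrow> 'a set" and e :: "'a \<Rightarrow> nat \<Rightarrow> 'a"
  assumes rexp: "rexp R I e"
begin

sublocale cring R
  using rexp by (simp add: rexp_def complete_ring_def lin_top_ring_def)

lemma e_closed: "c \<in> carrier R \<Longrightarrow> e c i \<in> carrier R"
  using rexp unfolding rexp_def rser_def by blast

lemma e_tends_to_zero: "c \<in> carrier R \<Longrightarrow> \<exists>N. \<forall>i\<ge>N. e c i \<in> I n"
  using rexp unfolding rexp_def rser_def by blast

lemma e_add: "c \<in> carrier R \<Longrightarrow> d \<in> carrier R \<Longrightarrow> e (c \<oplus> d) i = e c i \<oplus> e d i"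
  using rexp unfolding rexp_def by metis

lemma e_mult: "c \<in> carrier R \<Longrightarrow> d \<in> carrier R \<Longrightarrow> e (c \<otimes> d) = ser_mult R (e c) (e d)"
  using rexp unfolding rexp_def by blast

lemma e_one: "e \<one> = (\<lambda>i. if i = 0 then \<one> else \<zero>)"
  using rexp unfolding rexp_def by blast

lemma e_continuous: "\<exists>m. \<forall>c\<in>I m. \<forall>i. e c i \<in> I n"
  using rexp unfolding rexp_def by blast

lemma e_0: "c \<in> carrier R \<Longrightarrow> e c 0 = c"
  using rexp unfolding rexp_def by blast

lemma e_cocycle: "c \<in> carrier R \<Longrightarrow> e (e c i) j = add_pow R ((i + j) choose i) (e c (i + j))"
  using rexp unfolding rexp_def by blast

lemma e_zero: "e \<zero> i = \<zero>"
proof -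
  have "e \<zero> i \<oplus> e \<zero> i = \<zero> \<oplus> e \<zero> i"
    using e_add[of \<zero> \<zero> i] e_closed[of \<zero> i] by simp
  thus ?thesis using e_closed[of \<zero> i] by (metis add.right_cancel zero_closed)
qed

lemma e_neg: "c \<in> carrier R \<Longrightarrow> e (\<ominus> c) i = \<ominus> e c i"
  using e_add[of "\<ominus> c" c i] by (intro minus_equality[symmetric]) (auto simp: e_closed e_zero l_neg)

lemma e_minus: "c \<in> carrier R \<Longrightarrow> d \<in> carrier R \<Longrightarrow> e (c \<ominus> d) i = e c i \<ominus> e d i"
  by (simp add: minus_eq e_add e_neg)

lemma e_mult_fixed_left:
  "c \<in> fixed_elems R e \<Longrightarrow> d \<in> carrier R \<Longrightarrow> e (c \<otimes> d) i = c \<otimes> e d i"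
  by (auto simp: fixed_elems_def e_mult e_closed ser_mult_const_left)

lemma e_mult_fixed_right:
  "c \<in> fixed_elems R e \<Longrightarrow> d \<in> carrier R \<Longrightarrow> e (d \<otimes> c) i = e d i \<otimes> c"
  by (auto simp: fixed_elems_def e_mult e_closed ser_mult_const_right)

end

section \<open>The separated completed localization\<close>

locale completed_localization = cring R for R :: "('a, 'b) ring_scheme" (structure) +
  fixes I :: "nat \<Rightarrow> 'a set" and S :: "'a set"
  assumes I_ideal: "\<And>n. ideal (I n) R"
    and I_Suc_subset: "\<And>n. I (Suc n) \<subseteq> I n"
    and S_subset: "S \<subseteq> carrier R"
    and one_in_S: "\<one> \<in> S"
    and S_mult_closed: "\<And>s t. s \<in> S \<Longrightarrow> t \<in> S \<Longrightarrow> s \<otimes> t \<in> S"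
begin

abbreviation "rel \<equiv> loc_rel R I S"
abbreviation "cls \<equiv> loc_class R I S"
abbreviation "C \<equiv> cloc R I S"
abbreviation "T \<equiv> cloc_top R I S"
abbreviation "J \<equiv> cloc_j R I S"

lemma S_carrier [simp]: "s \<in> S \<Longrightarrow> s \<in> carrier R"
  using S_subset by blast

lemma I_add_closed: "x \<in> I n \<Longrightarrow> y \<in> I n \<Longrightarrow> x \<oplus> y \<in> I n"
  by (rule additive_subgroup.a_closed[OF ideal.axioms(1)[OF I_ideal]])

lemma I_zero_closed: "\<zero> \<in> I n"
  by (rule additive_subgroup.zero_closed[OF ideal.axioms(1)[OF I_ideal]])

lemma I_neg_closed: "x \<in> I n \<Longrightarrow> \<ominus> x \<in> I n"
  by (rule additive_subgroup.a_inv_closed[OF ideal.axioms(1)[OF I_ideal]])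

lemma I_mult_closed: "x \<in> I n \<Longrightarrow> c \<in> carrier R \<Longrightarrow> c \<otimes> x \<in> I n"
  by (rule ideal.I_l_closed[OF I_ideal])

lemma I_antimono: "n \<le> m \<Longrightarrow> I m \<subseteq> I n"
  by (induction m rule: dec_induct) (use I_Suc_subset in blast)+

lemma rel_iff: "rel n p q \<longleftrightarrow> p \<in> carrier R \<times> S \<and> q \<in> carrier R \<times> S \<and>
     (\<exists>u\<in>S. u \<otimes> (fst p \<otimes> snd q \<ominus> fst q \<otimes> snd p) \<in> I n)"
  by (simp add: loc_rel_def)

lemma rel_carrier: "rel n p q \<Longrightarrow> p \<in> carrier R \<times> S \<and> q \<in> carrier R \<times> S"
  by (simp add: rel_iff)

lemma rel_pairI:
  "\<lbrakk>a \<in> carrier R; s \<in> S; b \<in> carrier R; t \<in> S; u \<in> S; u \<otimes> (a \<otimes> t \<ominus> b \<otimes> s) \<in> I n\<rbrakk>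
   \<Longrightarrow> rel n (a, s) (b, t)"
  unfolding rel_iff by auto

lemma rel_pairE:
  assumes "rel n (a, s) (b, t)"
  obtains u where "a \<in> carrier R" "s \<in> S" "b \<in> carrier R" "t \<in> S" "u \<in> S"
    "u \<otimes> (a \<otimes> t \<ominus> b \<otimes> s) \<in> I n"
  using assms unfolding rel_iff by auto

lemma rel_eqI:
  assumes "p \<in> carrier R \<times> S" "q \<in> carrier R \<times> S" "fst p \<otimes> snd q = fst q \<otimes> snd p"
  shows "rel n p q"
  unfolding rel_iff using assms one_in_S I_zero_closed
  by (intro conjI bexI[of _ \<one>]) (auto simp: r_neg minus_eq)

lemma rel_pair_eqI:
  "\<lbrakk>a \<otimes> t = b \<otimes> s; a \<in> carrier R; s \<in> S; b \<in> carrier R; t \<in> S\<rbrakk> \<Longrightarrow> rel n (a, s) (b, t)"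
  by (rule rel_eqI) auto

lemma rel_refl: "p \<in> carrier R \<times> S \<Longrightarrow> rel n p p"
  by (rule rel_eqI) auto

lemma rel_sym:
  assumes "rel n p q"
  shows "rel n q p"
proof -
  obtain a s b t where pq: "p = (a, s)" "q = (b, t)" by fastforce
  then obtain u where u: "a \<in> carrier R" "s \<in> S" "b \<in> carrier R" "t \<in> S" "u \<in> S"
    "u \<otimes> (a \<otimes> t \<ominus> b \<otimes> s) \<in> I n"
    using assms rel_pairE by metis
  have "u \<otimes> (b \<otimes> s \<ominus> a \<otimes> t) = \<ominus> (u \<otimes> (a \<otimes> t \<ominus> b \<otimes> s))"
    using u(1,3) S_carrier[OF u(2)] S_carrier[OF u(4)] S_carrier[OF u(5)] by algebra
  thus ?thesis unfolding pq using u I_neg_closed by (intro rel_pairI[where u = u]) auto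
qed

lemma rel_trans:
  assumes "rel n p q" "rel n q r"
  shows "rel n p r"
proof -
  obtain a s b t c r' where pqr: "p = (a, s)" "q = (b, t)" "r = (c, r')" by (metis surj_pair)
  then obtain u where u: "a \<in> carrier R" "s \<in> S" "b \<in> carrier R" "t \<in> S" "u \<in> S"
    "u \<otimes> (a \<otimes> t \<ominus> b \<otimes> s) \<in> I n"
    using assms(1) rel_pairE by metis
  obtain v where v: "c \<in> carrier R" "r' \<in> S" "v \<in> S" "v \<otimes> (b \<otimes> r' \<ominus> c \<otimes> t) \<in> I n"
    using assms(2) pqr rel_pairE by metis
  have "(u \<otimes> v \<otimes> t) \<otimes> (a \<otimes> r' \<ominus> c \<otimes> s)
      = (v \<otimes> r') \<otimes> (u \<otimes> (a \<otimes> t \<ominus> b \<otimes> s)) \<oplus> (u \<otimes> s) \<otimes> (v \<otimes> (b \<otimes> r' \<ominus> c \<otimes> t))"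
    using u(1,3) v(1) S_carrier[OF u(2)] S_carrier[OF u(4)] S_carrier[OF u(5)]
      S_carrier[OF v(2)] S_carrier[OF v(3)]
    by algebra
  also have "\<dots> \<in> I n"
    using u v by (intro I_add_closed I_mult_closed[OF u(6)] I_mult_closed[OF v(4)]) auto
  finally show ?thesis
    unfolding pqr using u v by (intro rel_pairI[where u = "u \<otimes> v \<otimes> t"]) (auto intro: S_mult_closed)
qed

lemma rel_mono: "rel m p q \<Longrightarrow> n \<le> m \<Longrightarrow> rel n p q"
  using I_antimono unfolding rel_iff by blast

lemma cls_iff: "q \<in> cls n p \<longleftrightarrow> rel n p q"
  by (simp add: loc_class_def)

lemma cls_self: "p \<in> carrier R \<times> S \<Longrightarrow> p \<in> cls n p"
  by (simp add: cls_iff rel_refl)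

lemma cls_carrier: "q \<in> cls n p \<Longrightarrow> q \<in> carrier R \<times> S"
  by (simp add: cls_iff rel_carrier)

lemma cls_eqI:
  assumes "rel n p q"
  shows "cls n p = cls n q"
  using rel_trans[OF assms] rel_trans[OF rel_sym[OF assms]] by (auto simp: cls_iff)

lemma cls_eq_cls_of_mem: "q \<in> cls n p \<Longrightarrow> cls n p = cls n q"
  by (rule cls_eqI) (simp add: cls_iff)

lemma cls_antimono: "n \<le> m \<Longrightarrow> cls m p \<subseteq> cls n p"
  by (meson cls_iff rel_mono subsetI)

lemma frac_add_closed: "p \<in> carrier R \<times> S \<Longrightarrow> q \<in> carrier R \<times> S \<Longrightarrow> frac_add R p q \<in> carrier R \<times> S"
  by (auto simp: frac_add_def S_mult_closed)

lemma frac_mult_closed: "p \<in> carrier R \<times> S \<Longrightarrow> q \<in> carrier R \<times> S \<Longrightarrow> frac_mult R p q \<in> carrier R \<times> S"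
  by (auto simp: frac_mult_def S_mult_closed)

lemma rel_frac_add:
  assumes "rel n p p'" "rel n q q'"
  shows "rel n (frac_add R p q) (frac_add R p' q')"
proof -
  obtain a s a' s' b t b' t' where pq: "p = (a, s)" "p' = (a', s')" "q = (b, t)" "q' = (b', t')"
    by (metis surj_pair)
  then obtain u where u: "a \<in> carrier R" "s \<in> S" "a' \<in> carrier R" "s' \<in> S" "u \<in> S"
    "u \<otimes> (a \<otimes> s' \<ominus> a' \<otimes> s) \<in> I n"
    using assms(1) rel_pairE by metis
  obtain v where v: "b \<in> carrier R" "t \<in> S" "b' \<in> carrier R" "t' \<in> S" "v \<in> S"
    "v \<otimes> (b \<otimes> t' \<ominus> b' \<otimes> t) \<in> I n"
    using assms(2) pq rel_pairE by metis
  have "(u \<otimes> v) \<otimes> ((a \<otimes> t \<oplus> b \<otimes> s) \<otimes> (s' \<otimes> t') \<ominus> (a' \<otimes> t' \<oplus> b' \<otimes> s') \<otimes> (s \<otimes> t))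
      = (v \<otimes> t \<otimes> t') \<otimes> (u \<otimes> (a \<otimes> s' \<ominus> a' \<otimes> s)) \<oplus> (u \<otimes> s \<otimes> s') \<otimes> (v \<otimes> (b \<otimes> t' \<ominus> b' \<otimes> t))"
    using u(1,3) v(1,3) S_carrier[OF u(2)] S_carrier[OF u(4)] S_carrier[OF u(5)]
      S_carrier[OF v(2)] S_carrier[OF v(4)] S_carrier[OF v(5)]
    by algebra
  also have "\<dots> \<in> I n"
    using u v by (intro I_add_closed I_mult_closed[OF u(6)] I_mult_closed[OF v(6)]) auto
  finally show ?thesis
    unfolding pq frac_add_def fst_conv snd_conv using u v
    by (intro rel_pairI[where u = "u \<otimes> v"]) (auto intro: S_mult_closed)
qed

lemma rel_frac_mult:
  assumes "rel n p p'" "rel n q q'"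
  shows "rel n (frac_mult R p q) (frac_mult R p' q')"
proof -
  obtain a s a' s' b t b' t' where pq: "p = (a, s)" "p' = (a', s')" "q = (b, t)" "q' = (b', t')"
    by (metis surj_pair)
  then obtain u where u: "a \<in> carrier R" "s \<in> S" "a' \<in> carrier R" "s' \<in> S" "u \<in> S"
    "u \<otimes> (a \<otimes> s' \<ominus> a' \<otimes> s) \<in> I n"
    using assms(1) rel_pairE by metis
  obtain v where v: "b \<in> carrier R" "t \<in> S" "b' \<in> carrier R" "t' \<in> S" "v \<in> S"
    "v \<otimes> (b \<otimes> t' \<ominus> b' \<otimes> t) \<in> I n"
    using assms(2) pq rel_pairE by metis
  have "(u \<otimes> v) \<otimes> ((a \<otimes> b) \<otimes> (s' \<otimes> t') \<ominus> (a' \<otimes> b') \<otimes> (s \<otimes> t))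
      = (v \<otimes> b \<otimes> t') \<otimes> (u \<otimes> (a \<otimes> s' \<ominus> a' \<otimes> s)) \<oplus> (u \<otimes> a' \<otimes> s) \<otimes> (v \<otimes> (b \<otimes> t' \<ominus> b' \<otimes> t))"
    using u(1,3) v(1,3) S_carrier[OF u(2)] S_carrier[OF u(4)] S_carrier[OF u(5)]
      S_carrier[OF v(2)] S_carrier[OF v(4)] S_carrier[OF v(5)]
    by algebra
  also have "\<dots> \<in> I n"
    using u v by (intro I_add_closed I_mult_closed[OF u(6)] I_mult_closed[OF v(6)]) auto
  finally show ?thesis
    unfolding pq frac_mult_def fst_conv snd_conv using u v
    by (intro rel_pairI[where u = "u \<otimes> v"]) (auto intro: S_mult_closed)
qed

lemma cls_binop:
  assumes closed: "\<And>p q. p \<in> carrier R \<times> S \<Longrightarrow> q \<in> carrier R \<times> S \<Longrightarrow> f p q \<in> carrier R \<times> S"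
    and compat: "\<And>p p' q q'. rel n p p' \<Longrightarrow> rel n q q' \<Longrightarrow> rel n (f p q) (f p' q')"
    and "p \<in> carrier R \<times> S" "q \<in> carrier R \<times> S"
  shows "{r. \<exists>p'\<in>cls n p. \<exists>q'\<in>cls n q. rel n (f p' q') r} = cls n (f p q)"
proof (intro equalityI subsetI)
  fix r assume "r \<in> {r. \<exists>p'\<in>cls n p. \<exists>q'\<in>cls n q. rel n (f p' q') r}"
  then obtain p' q' where "rel n p p'" "rel n q q'" "rel n (f p' q') r" by (auto simp: cls_iff)
  thus "r \<in> cls n (f p q)" using rel_trans[OF compat] by (simp add: cls_iff)
next
  fix r assume "r \<in> cls n (f p q)"
  hence "rel n (f p q) r" by (simp add: cls_iff)
  thus "r \<in> {r. \<exists>p'\<in>cls n p. \<exists>q'\<in>cls n q. rel n (f p' q') r}"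
    using cls_self[OF assms(3)] cls_self[OF assms(4)] by blast
qed

lemma cloc_carrier_iff:
  "x \<in> carrier C \<longleftrightarrow> (\<forall>n. \<exists>p\<in>carrier R \<times> S. x n = cls n p) \<and> (\<forall>n. x (Suc n) \<subseteq> x n)"
  by (simp add: cloc_def)

lemma cloc_add_eq: "x \<oplus>\<^bsub>C\<^esub> y = (\<lambda>n. {r. \<exists>p\<in>x n. \<exists>q\<in>y n. rel n (frac_add R p q) r})"
  by (simp add: cloc_def)

lemma cloc_mult_eq: "x \<otimes>\<^bsub>C\<^esub> y = (\<lambda>n. {r. \<exists>p\<in>x n. \<exists>q\<in>y n. rel n (frac_mult R p q) r})"
  by (simp add: cloc_def)

lemma cloc_zero_eq: "\<zero>\<^bsub>C\<^esub> = (\<lambda>n. cls n (\<zero>, \<one>))"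
  by (simp add: cloc_def)

lemma cloc_one_eq: "\<one>\<^bsub>C\<^esub> = (\<lambda>n. cls n (\<one>, \<one>))"
  by (simp add: cloc_def)

lemma cloc_level_antimono:
  assumes "x \<in> carrier C" "n \<le> m"
  shows "x m \<subseteq> x n"
  using assms(2) by (induction m rule: dec_induct) (use assms(1) cloc_carrier_iff in blast)+

lemma cloc_level_eq_cls:
  assumes "x \<in> carrier C" "p \<in> x n"
  shows "x n = cls n p" and "p \<in> carrier R \<times> S"
proof -
  obtain p0 where "x n = cls n p0" using assms(1) unfolding cloc_carrier_iff by blast
  thus "x n = cls n p" "p \<in> carrier R \<times> S"
    using assms(2) cls_eq_cls_of_mem cls_carrier by auto
qed

lemma cloc_level_rep:
  assumes "x \<in> carrier C"
  obtains a s where "(a, s) \<in> x n" "a \<in> carrier R" "s \<in> S" "s \<in> carrier R"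
proof -
  obtain p where "p \<in> carrier R \<times> S" "x n = cls n p" using assms unfolding cloc_carrier_iff by blast
  thus ?thesis using that cls_self by (cases p) fastforce
qed

lemma cloc_carrierI:
  assumes "\<And>n. x n = cls n (g n)" "\<And>n. g n \<in> carrier R \<times> S" "\<And>n. rel n (g (Suc n)) (g n)"
  shows "x \<in> carrier C"
  unfolding cloc_carrier_iff
proof (intro conjI allI)
  fix n
  show "\<exists>p\<in>carrier R \<times> S. x n = cls n p" using assms by blast
  have "x (Suc n) \<subseteq> cls n (g (Suc n))" using assms(1) cls_antimono[of n "Suc n"] by auto
  also have "\<dots> = x n" using assms(1) cls_eqI[OF assms(3)] by simp
  finally show "x (Suc n) \<subseteq> x n" .
qed

lemma cloc_add_level:
  assumes "x \<in> carrier C" "y \<in> carrier C" "p \<in> x n" "q \<in> y n"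
  shows "(x \<oplus>\<^bsub>C\<^esub> y) n = cls n (frac_add R p q)"
  unfolding cloc_add_eq cloc_level_eq_cls(1)[OF assms(1,3)] cloc_level_eq_cls(1)[OF assms(2,4)]
  by (rule cls_binop) (use assms frac_add_closed rel_frac_add cloc_level_eq_cls(2) in auto)

lemma cloc_mult_level:
  assumes "x \<in> carrier C" "y \<in> carrier C" "p \<in> x n" "q \<in> y n"
  shows "(x \<otimes>\<^bsub>C\<^esub> y) n = cls n (frac_mult R p q)"
  unfolding cloc_mult_eq cloc_level_eq_cls(1)[OF assms(1,3)] cloc_level_eq_cls(1)[OF assms(2,4)]
  by (rule cls_binop) (use assms frac_mult_closed rel_frac_mult cloc_level_eq_cls(2) in auto)

definition rep :: "(nat \<Rightarrow> ('a \<times> 'a) set) \<Rightarrow> nat \<Rightarrow> 'a \<times> 'a" where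
  "rep x n = (SOME p. p \<in> x n)"

lemma rep_mem: "x \<in> carrier C \<Longrightarrow> rep x n \<in> x n"
  unfolding rep_def by (rule cloc_level_rep[of x n]) (auto intro: someI)

lemma rep_carrier: "x \<in> carrier C \<Longrightarrow> rep x n \<in> carrier R \<times> S"
  using rep_mem cloc_level_eq_cls(2) by blast

lemma rel_rep_Suc:
  assumes "x \<in> carrier C"
  shows "rel n (rep x (Suc n)) (rep x n)"
proof -
  have "rep x (Suc n) \<in> x n" using rep_mem[OF assms] cloc_level_antimono[OF assms, of n "Suc n"] by auto
  thus ?thesis using cloc_level_eq_cls(1)[OF assms rep_mem[OF assms]] by (simp add: cls_iff rel_sym)
qed

lemma cloc_add_closed: "x \<in> carrier C \<Longrightarrow> y \<in> carrier C \<Longrightarrow> x \<oplus>\<^bsub>C\<^esub> y \<in> carrier C"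
  by (rule cloc_carrierI[where g = "\<lambda>n. frac_add R (rep x n) (rep y n)"])
     (use cloc_add_level rep_mem rep_carrier frac_add_closed rel_frac_add rel_rep_Suc in auto)

lemma cloc_mult_closed: "x \<in> carrier C \<Longrightarrow> y \<in> carrier C \<Longrightarrow> x \<otimes>\<^bsub>C\<^esub> y \<in> carrier C"
  by (rule cloc_carrierI[where g = "\<lambda>n. frac_mult R (rep x n) (rep y n)"])
     (use cloc_mult_level rep_mem rep_carrier frac_mult_closed rel_frac_mult rel_rep_Suc in auto)

lemma cloc_zero_closed: "\<zero>\<^bsub>C\<^esub> \<in> carrier C"
  by (rule cloc_carrierI[where g = "\<lambda>n. (\<zero>, \<one>)"]) (auto simp: cloc_zero_eq one_in_S intro!: rel_refl)

lemma cloc_one_closed: "\<one>\<^bsub>C\<^esub> \<in> carrier C"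
  by (rule cloc_carrierI[where g = "\<lambda>n. (\<one>, \<one>)"]) (auto simp: cloc_one_eq one_in_S intro!: rel_refl)

lemma J_closed: "b \<in> carrier R \<Longrightarrow> J b \<in> carrier C"
  unfolding cloc_j_def by (rule cloc_carrierI[where g = "\<lambda>n. (b, \<one>)"]) (auto simp: one_in_S intro!: rel_refl)

lemma cloc_add_mem:
  "\<lbrakk>x \<in> carrier C; y \<in> carrier C; p \<in> x n; q \<in> y n\<rbrakk> \<Longrightarrow> frac_add R p q \<in> (x \<oplus>\<^bsub>C\<^esub> y) n"
  using cloc_add_level cls_self frac_add_closed cloc_level_eq_cls(2) by metis

lemma cloc_mult_mem:
  "\<lbrakk>x \<in> carrier C; y \<in> carrier C; p \<in> x n; q \<in> y n\<rbrakk> \<Longrightarrow> frac_mult R p q \<in> (x \<otimes>\<^bsub>C\<^esub> y) n"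
  using cloc_mult_level cls_self frac_mult_closed cloc_level_eq_cls(2) by metis

lemma cloc_zero_mem: "(\<zero>, \<one>) \<in> \<zero>\<^bsub>C\<^esub> n"
  by (simp add: cloc_zero_eq cls_self one_in_S)

lemma cloc_one_mem: "(\<one>, \<one>) \<in> \<one>\<^bsub>C\<^esub> n"
  by (simp add: cloc_one_eq cls_self one_in_S)

lemma J_mem: "b \<in> carrier R \<Longrightarrow> (b, \<one>) \<in> J b n"
  unfolding cloc_j_def by (rule cls_self) (simp add: one_in_S)

lemma cloc_eqI:
  assumes "\<And>n. \<exists>p\<in>x n. \<exists>q\<in>y n. fst p \<otimes> snd q = fst q \<otimes> snd p"
    and "x \<in> carrier C" "y \<in> carrier C"
  shows "x = y"
proof
  fix n
  obtain p q where "p \<in> x n" "q \<in> y n" "fst p \<otimes> snd q = fst q \<otimes> snd p" using assms(1) by blast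
  thus "x n = y n"
    using cloc_level_eq_cls[OF assms(2)] cloc_level_eq_cls[OF assms(3)] cls_eqI rel_eqI by metis
qed

lemma cloc_add_assoc:
  assumes "x \<in> carrier C" "y \<in> carrier C" "z \<in> carrier C"
  shows "(x \<oplus>\<^bsub>C\<^esub> y) \<oplus>\<^bsub>C\<^esub> z = x \<oplus>\<^bsub>C\<^esub> (y \<oplus>\<^bsub>C\<^esub> z)"
proof (rule cloc_eqI, goal_cases)
  case (1 n)
  obtain a s b t c r where reps: "(a, s) \<in> x n" "(b, t) \<in> y n" "(c, r) \<in> z n"
    and carr: "a \<in> carrier R" "b \<in> carrier R" "c \<in> carrier R" "s \<in> carrier R" "t \<in> carrier R" "r \<in> carrier R"
    by (metis assms cloc_level_rep)
  define p q where "p = frac_add R (frac_add R (a, s) (b, t)) (c, r)" and "q = frac_add R (a, s) (frac_add R (b, t) (c, r))"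
  have "p \<in> ((x \<oplus>\<^bsub>C\<^esub> y) \<oplus>\<^bsub>C\<^esub> z) n" "q \<in> (x \<oplus>\<^bsub>C\<^esub> (y \<oplus>\<^bsub>C\<^esub> z)) n"
    unfolding p_def q_def using assms reps by (auto intro!: cloc_add_mem cloc_add_closed)
  moreover have "fst p \<otimes> snd q = fst q \<otimes> snd p"
    unfolding p_def q_def frac_add_def fst_conv snd_conv using carr by algebra
  ultimately show ?case by blast
qed (use assms in \<open>auto intro!: cloc_add_mem cloc_add_closed\<close>)

lemma cloc_mult_assoc:
  assumes "x \<in> carrier C" "y \<in> carrier C" "z \<in> carrier C"
  shows "(x \<otimes>\<^bsub>C\<^esub> y) \<otimes>\<^bsub>C\<^esub> z = x \<otimes>\<^bsub>C\<^esub> (y \<otimes>\<^bsub>C\<^esub> z)"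
proof (rule cloc_eqI, goal_cases)
  case (1 n)
  obtain a s b t c r where reps: "(a, s) \<in> x n" "(b, t) \<in> y n" "(c, r) \<in> z n"
    and carr: "a \<in> carrier R" "b \<in> carrier R" "c \<in> carrier R" "s \<in> carrier R" "t \<in> carrier R" "r \<in> carrier R"
    by (metis assms cloc_level_rep)
  define p q where "p = frac_mult R (frac_mult R (a, s) (b, t)) (c, r)" and "q = frac_mult R (a, s) (frac_mult R (b, t) (c, r))"
  have "p \<in> ((x \<otimes>\<^bsub>C\<^esub> y) \<otimes>\<^bsub>C\<^esub> z) n" "q \<in> (x \<otimes>\<^bsub>C\<^esub> (y \<otimes>\<^bsub>C\<^esub> z)) n"
    unfolding p_def q_def using assms reps by (auto intro!: cloc_mult_mem cloc_mult_closed)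
  moreover have "fst p \<otimes> snd q = fst q \<otimes> snd p"
    unfolding p_def q_def frac_mult_def fst_conv snd_conv using carr by algebra
  ultimately show ?case by blast
qed (use assms in \<open>auto intro!: cloc_mult_mem cloc_mult_closed\<close>)

lemma cloc_distrib:
  assumes "x \<in> carrier C" "y \<in> carrier C" "z \<in> carrier C"
  shows "(x \<oplus>\<^bsub>C\<^esub> y) \<otimes>\<^bsub>C\<^esub> z = x \<otimes>\<^bsub>C\<^esub> z \<oplus>\<^bsub>C\<^esub> y \<otimes>\<^bsub>C\<^esub> z"
proof (rule cloc_eqI, goal_cases)
  case (1 n)
  obtain a s b t c r where reps: "(a, s) \<in> x n" "(b, t) \<in> y n" "(c, r) \<in> z n"
    and carr: "a \<in> carrier R" "b \<in> carrier R" "c \<in> carrier R" "s \<in> carrier R" "t \<in> carrier R" "r \<in> carrier R"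
    by (metis assms cloc_level_rep)
  define p q where "p = frac_mult R (frac_add R (a, s) (b, t)) (c, r)" and "q = frac_add R (frac_mult R (a, s) (c, r)) (frac_mult R (b, t) (c, r))"
  have "p \<in> ((x \<oplus>\<^bsub>C\<^esub> y) \<otimes>\<^bsub>C\<^esub> z) n" "q \<in> (x \<otimes>\<^bsub>C\<^esub> z \<oplus>\<^bsub>C\<^esub> y \<otimes>\<^bsub>C\<^esub> z) n"
    unfolding p_def q_def using assms reps by (auto intro!: cloc_add_mem cloc_mult_mem cloc_add_closed cloc_mult_closed)
  moreover have "fst p \<otimes> snd q = fst q \<otimes> snd p"
    unfolding p_def q_def frac_add_def frac_mult_def fst_conv snd_conv using carr by algebra
  ultimately show ?case by blast
qed (use assms in \<open>auto intro!: cloc_add_mem cloc_mult_mem cloc_add_closed cloc_mult_closed\<close>)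

lemma cloc_add_comm:
  assumes "x \<in> carrier C" "y \<in> carrier C"
  shows "x \<oplus>\<^bsub>C\<^esub> y = y \<oplus>\<^bsub>C\<^esub> x"
proof (rule cloc_eqI, goal_cases)
  case (1 n)
  obtain a s b t where reps: "(a, s) \<in> x n" "(b, t) \<in> y n"
    and carr: "a \<in> carrier R" "b \<in> carrier R" "s \<in> carrier R" "t \<in> carrier R"
    by (metis assms cloc_level_rep)
  define p q where "p = frac_add R (a, s) (b, t)" and "q = frac_add R (b, t) (a, s)"
  have "p \<in> (x \<oplus>\<^bsub>C\<^esub> y) n" "q \<in> (y \<oplus>\<^bsub>C\<^esub> x) n"
    unfolding p_def q_def using assms reps by (auto intro!: cloc_add_mem cloc_add_closed)
  moreover have "fst p \<otimes> snd q = fst q \<otimes> snd p"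
    unfolding p_def q_def frac_add_def fst_conv snd_conv using carr by algebra
  ultimately show ?case by blast
qed (use assms in \<open>auto intro!: cloc_add_mem cloc_add_closed\<close>)

lemma cloc_mult_comm:
  assumes "x \<in> carrier C" "y \<in> carrier C"
  shows "x \<otimes>\<^bsub>C\<^esub> y = y \<otimes>\<^bsub>C\<^esub> x"
proof (rule cloc_eqI, goal_cases)
  case (1 n)
  obtain a s b t where reps: "(a, s) \<in> x n" "(b, t) \<in> y n"
    and carr: "a \<in> carrier R" "b \<in> carrier R" "s \<in> carrier R" "t \<in> carrier R"
    by (metis assms cloc_level_rep)
  define p q where "p = frac_mult R (a, s) (b, t)" and "q = frac_mult R (b, t) (a, s)"
  have "p \<in> (x \<otimes>\<^bsub>C\<^esub> y) n" "q \<in> (y \<otimes>\<^bsub>C\<^esub> x) n"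
    unfolding p_def q_def using assms reps by (auto intro!: cloc_mult_mem cloc_mult_closed)
  moreover have "fst p \<otimes> snd q = fst q \<otimes> snd p"
    unfolding p_def q_def frac_mult_def fst_conv snd_conv using carr by algebra
  ultimately show ?case by blast
qed (use assms in \<open>auto intro!: cloc_mult_mem cloc_mult_closed\<close>)

lemma cloc_zero_add:
  assumes "x \<in> carrier C"
  shows "\<zero>\<^bsub>C\<^esub> \<oplus>\<^bsub>C\<^esub> x = x"
proof (rule cloc_eqI, goal_cases)
  case (1 n)
  obtain a s where reps: "(a, s) \<in> x n" and carr: "a \<in> carrier R" "s \<in> carrier R"
    by (metis assms cloc_level_rep)
  define p q where "p = frac_add R (\<zero>, \<one>) (a, s)" and "q = (a, s)"
  have "p \<in> (\<zero>\<^bsub>C\<^esub> \<oplus>\<^bsub>C\<^esub> x) n" "q \<in> (x) n"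
    unfolding p_def q_def using assms reps by (auto intro!: cloc_add_mem cloc_add_closed cloc_zero_mem cloc_zero_closed)
  moreover have "fst p \<otimes> snd q = fst q \<otimes> snd p"
    unfolding p_def q_def frac_add_def fst_conv snd_conv using carr by algebra
  ultimately show ?case by blast
qed (use assms in \<open>auto intro!: cloc_add_mem cloc_add_closed cloc_zero_mem cloc_zero_closed\<close>)

lemma cloc_one_mult:
  assumes "x \<in> carrier C"
  shows "\<one>\<^bsub>C\<^esub> \<otimes>\<^bsub>C\<^esub> x = x"
proof (rule cloc_eqI, goal_cases)
  case (1 n)
  obtain a s where reps: "(a, s) \<in> x n" and carr: "a \<in> carrier R" "s \<in> carrier R"
    by (metis assms cloc_level_rep)
  define p q where "p = frac_mult R (\<one>, \<one>) (a, s)" and "q = (a, s)"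
  have "p \<in> (\<one>\<^bsub>C\<^esub> \<otimes>\<^bsub>C\<^esub> x) n" "q \<in> (x) n"
    unfolding p_def q_def using assms reps by (auto intro!: cloc_mult_mem cloc_mult_closed cloc_one_mem cloc_one_closed)
  moreover have "fst p \<otimes> snd q = fst q \<otimes> snd p"
    unfolding p_def q_def frac_mult_def fst_conv snd_conv using carr by algebra
  ultimately show ?case by blast
qed (use assms in \<open>auto intro!: cloc_mult_mem cloc_mult_closed cloc_one_mem cloc_one_closed\<close>)

lemma cloc_neg_add:
  assumes "x \<in> carrier C"
  shows "J (\<ominus> \<one>) \<otimes>\<^bsub>C\<^esub> x \<oplus>\<^bsub>C\<^esub> x = \<zero>\<^bsub>C\<^esub>"
proof (rule cloc_eqI, goal_cases)
  case (1 n)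
  obtain a s where reps: "(a, s) \<in> x n" and carr: "a \<in> carrier R" "s \<in> carrier R"
    by (metis assms cloc_level_rep)
  define p q where "p = frac_add R (frac_mult R (\<ominus> \<one>, \<one>) (a, s)) (a, s)" and "q = (\<zero>, \<one>)"
  have "p \<in> (J (\<ominus> \<one>) \<otimes>\<^bsub>C\<^esub> x \<oplus>\<^bsub>C\<^esub> x) n" "q \<in> (\<zero>\<^bsub>C\<^esub>) n"
    unfolding p_def q_def using assms reps by (auto intro!: cloc_add_mem cloc_mult_mem cloc_add_closed cloc_mult_closed J_mem J_closed cloc_zero_mem cloc_zero_closed)
  moreover have "fst p \<otimes> snd q = fst q \<otimes> snd p"
    unfolding p_def q_def frac_add_def frac_mult_def fst_conv snd_conv using carr by algebra
  ultimately show ?case by blast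
qed (use assms in \<open>auto intro!: cloc_add_mem cloc_mult_mem cloc_add_closed cloc_mult_closed J_mem J_closed cloc_zero_mem cloc_zero_closed\<close>)

lemma cloc_cring: "cring C"
proof (rule cringI)
  show "abelian_group C"
  proof (rule abelian_groupI)
    show "\<exists>y\<in>carrier C. y \<oplus>\<^bsub>C\<^esub> x = \<zero>\<^bsub>C\<^esub>" if "x \<in> carrier C" for x
      using that cloc_neg_add by (blast intro: cloc_mult_closed J_closed)
  qed (auto intro: cloc_add_closed cloc_zero_closed cloc_add_assoc cloc_add_comm cloc_zero_add)
  show "comm_monoid C"
    by (rule comm_monoidI)
      (auto intro: cloc_mult_closed cloc_one_closed cloc_mult_assoc cloc_one_mult cloc_mult_comm)
qed (rule cloc_distrib)

end

section \<open>Topology and completeness of the completed localization\<close>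

sublocale completed_localization \<subseteq> cloc: cring C
  by (rule cloc_cring)

context completed_localization
begin

lemma cloc_add_level_cong: "x n = x' n \<Longrightarrow> y n = y' n \<Longrightarrow> (x \<oplus>\<^bsub>C\<^esub> y) n = (x' \<oplus>\<^bsub>C\<^esub> y') n"
  by (simp add: cloc_add_eq)

lemma cloc_mult_level_cong: "x n = x' n \<Longrightarrow> y n = y' n \<Longrightarrow> (x \<otimes>\<^bsub>C\<^esub> y) n = (x' \<otimes>\<^bsub>C\<^esub> y') n"
  by (simp add: cloc_mult_eq)

lemma cloc_minus_level_zero_iff:
  assumes "x \<in> carrier C" "y \<in> carrier C"
  shows "(x \<ominus>\<^bsub>C\<^esub> y) n = \<zero>\<^bsub>C\<^esub> n \<longleftrightarrow> x n = y n"
proof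
  assume "(x \<ominus>\<^bsub>C\<^esub> y) n = \<zero>\<^bsub>C\<^esub> n"
  hence "((x \<ominus>\<^bsub>C\<^esub> y) \<oplus>\<^bsub>C\<^esub> y) n = (\<zero>\<^bsub>C\<^esub> \<oplus>\<^bsub>C\<^esub> y) n" by (rule cloc_add_level_cong) simp
  thus "x n = y n" using assms by (simp add: cloc.minus_eq cloc.a_assoc cloc.l_neg)
next
  assume "x n = y n"
  hence "(x \<ominus>\<^bsub>C\<^esub> y) n = (y \<ominus>\<^bsub>C\<^esub> y) n" unfolding cloc.minus_eq by (rule cloc_add_level_cong) simp
  thus "(x \<ominus>\<^bsub>C\<^esub> y) n = \<zero>\<^bsub>C\<^esub> n" using assms by (simp add: cloc.minus_eq cloc.r_neg)
qed

lemma cloc_level_eq_mono: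
  assumes "x \<in> carrier C" "y \<in> carrier C" "x m = y m" "n \<le> m"
  shows "x n = y n"
proof -
  obtain p where "p \<in> x m" by (metis assms(1) cloc_level_rep)
  hence "p \<in> x n" "p \<in> y n" using assms cloc_level_antimono by blast+
  thus ?thesis using assms(1,2) cloc_level_eq_cls(1) by metis
qed

lemma cloc_top_eq: "T n = {x \<in> carrier C. x n = \<zero>\<^bsub>C\<^esub> n}"
  by (simp add: cloc_top_def)

lemma diff_in_cloc_top_iff:
  "x \<in> carrier C \<Longrightarrow> y \<in> carrier C \<Longrightarrow> x \<ominus>\<^bsub>C\<^esub> y \<in> T n \<longleftrightarrow> x n = y n"
  by (simp add: cloc_top_eq cloc_minus_level_zero_iff)

lemma cloc_top_ideal: "ideal (T n) C"
proof (rule idealI)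
  show "ring C" by (rule cloc.ring_axioms)
  show "subgroup (T n) (add_monoid C)"
  proof (rule cloc.add.subgroupI)
    show "T n \<subseteq> carrier C" "T n \<noteq> {}" using cloc_zero_closed by (auto simp: cloc_top_eq)
  next
    fix a b assume "a \<in> T n" "b \<in> T n"
    thus "\<ominus>\<^bsub>C\<^esub> a \<in> T n" "a \<oplus>\<^bsub>C\<^esub> b \<in> T n"
      using diff_in_cloc_top_iff[of "\<zero>\<^bsub>C\<^esub>" a n] cloc_add_level_cong[of a n "\<zero>\<^bsub>C\<^esub>" b "\<zero>\<^bsub>C\<^esub>"]
      by (auto simp: cloc_top_eq cloc.minus_eq cloc_zero_closed cloc_add_closed)
  qed
next
  fix a x assume "a \<in> T n" "x \<in> carrier C"
  thus "x \<otimes>\<^bsub>C\<^esub> a \<in> T n" "a \<otimes>\<^bsub>C\<^esub> x \<in> T n"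
    using cloc_mult_level_cong[of x n x a "\<zero>\<^bsub>C\<^esub>"]
    by (auto simp: cloc_top_eq cloc.m_comm cloc_mult_closed)
qed

lemma cloc_top_antimono: "n \<le> m \<Longrightarrow> T m \<subseteq> T n"
  using cloc_level_eq_mono[OF _ cloc_zero_closed] by (auto simp: cloc_top_eq)

lemma top_coset_cloc:
  assumes "x \<in> carrier C"
  shows "top_coset C T n x = {z \<in> carrier C. z n = x n}"
proof (intro equalityI subsetI)
  fix z assume "z \<in> top_coset C T n x"
  then obtain y where "y \<in> T n" "z = x \<oplus>\<^bsub>C\<^esub> y" by (auto simp: top_coset_def)
  thus "z \<in> {z \<in> carrier C. z n = x n}"
    using assms cloc_add_level_cong[of x n x y "\<zero>\<^bsub>C\<^esub>"]
    by (auto simp: cloc_top_eq cloc_add_closed)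
next
  fix z assume z: "z \<in> {z \<in> carrier C. z n = x n}"
  hence "z \<ominus>\<^bsub>C\<^esub> x \<in> T n" "z = x \<oplus>\<^bsub>C\<^esub> (z \<ominus>\<^bsub>C\<^esub> x)"
    using assms diff_in_cloc_top_iff cloc.a_lcomm[of x z "\<ominus>\<^bsub>C\<^esub> x"]
    by (auto simp: cloc.minus_eq cloc.r_neg)
  thus "z \<in> top_coset C T n x" by (auto simp: top_coset_def)
qed

lemma canon_lim_cloc_inj: "inj_on (canon_lim C T) (carrier C)"
proof (rule inj_onI)
  fix x y assume "x \<in> carrier C" "y \<in> carrier C" "canon_lim C T x = canon_lim C T y"
  hence "x \<in> top_coset C T n y" for n
    using top_coset_cloc by (metis (mono_tags, lifting) canon_lim_def mem_Collect_eq)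
  thus "x = y" using \<open>y \<in> carrier C\<close> by (auto simp: top_coset_cloc)
qed

lemma canon_lim_cloc_image: "canon_lim C T ` carrier C \<subseteq> inv_limit C T"
proof (intro subsetI)
  fix w assume "w \<in> canon_lim C T ` carrier C"
  then obtain x where x: "x \<in> carrier C" "w = canon_lim C T x" by auto
  have "w (Suc n) \<subseteq> w n" for n
  proof
    fix u assume "u \<in> w (Suc n)"
    hence "u \<in> carrier C" "u (Suc n) = x (Suc n)" using x top_coset_cloc by (auto simp: canon_lim_def)
    hence "u \<in> carrier C" "u n = x n" using cloc_level_eq_mono[OF _ x(1), of u "Suc n" n] by auto
    thus "u \<in> w n" using x top_coset_cloc by (auto simp: canon_lim_def)
  qed
  thus "w \<in> inv_limit C T" using x by (auto simp: inv_limit_def canon_lim_def)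
qed

lemma canon_lim_cloc_surj: "inv_limit C T \<subseteq> canon_lim C T ` carrier C"
proof (intro subsetI)
  fix w assume "w \<in> inv_limit C T"
  hence w_Suc: "\<And>n. w (Suc n) \<subseteq> w n" and "\<forall>n. \<exists>x\<in>carrier C. w n = top_coset C T n x"
    by (auto simp: inv_limit_def)
  then obtain b where b: "\<And>n. b n \<in> carrier C" "\<And>n. w n = top_coset C T n (b n)"
    by metis
  have b_Suc: "b (Suc n) n = b n n" for n
  proof -
    have "b (Suc n) \<in> w (Suc n)" using b top_coset_cloc by auto
    hence "b (Suc n) \<in> w n" using w_Suc by blast
    thus ?thesis using b top_coset_cloc by auto
  qed
  define z where "z = (\<lambda>n. b n n)"
  have z: "z \<in> carrier C"
    unfolding cloc_carrier_iff
  proof (intro conjI allI)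
    fix n
    show "\<exists>p\<in>carrier R \<times> S. z n = cls n p" using b(1)[of n] unfolding z_def cloc_carrier_iff by blast
    show "z (Suc n) \<subseteq> z n"
      using cloc_level_antimono[OF b(1), of n "Suc n"] b_Suc by (auto simp: z_def)
  qed
  have "top_coset C T n z = w n" for n
    unfolding top_coset_cloc[OF z] b(2)[of n] top_coset_cloc[OF b(1)] by (simp add: z_def)
  hence "w = canon_lim C T z" unfolding canon_lim_def by auto
  thus "w \<in> canon_lim C T ` carrier C" using z by auto
qed

lemma cloc_complete: "complete_ring C T"
  unfolding complete_ring_def lin_top_ring_def bij_betw_def
  using cloc_cring cloc_top_ideal cloc_top_antimono canon_lim_cloc_inj
    canon_lim_cloc_image canon_lim_cloc_surj
  by (simp add: subset_antisym)

definition J_inv :: "'a \<Rightarrow> nat \<Rightarrow> ('a \<times> 'a) set" where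
  "J_inv s = (\<lambda>n. cls n (\<one>, s))"

lemma J_inv_closed: "s \<in> S \<Longrightarrow> J_inv s \<in> carrier C"
  unfolding J_inv_def by (rule cloc_carrierI[where g = "\<lambda>n. (\<one>, s)"]) (auto intro!: rel_refl)

lemma J_inv_mem: "s \<in> S \<Longrightarrow> (\<one>, s) \<in> J_inv s n"
  unfolding J_inv_def by (rule cls_self) simp

lemma J_zero: "J \<zero> = \<zero>\<^bsub>C\<^esub>"
  by (simp add: cloc_j_def cloc_zero_eq)

lemma J_inv_mult_J:
  assumes "s \<in> S"
  shows "J_inv s \<otimes>\<^bsub>C\<^esub> J s = \<one>\<^bsub>C\<^esub>"
proof (rule cloc_eqI)
  fix n
  define p where "p = frac_mult R (\<one>, s) (s, \<one>)"
  have "p \<in> (J_inv s \<otimes>\<^bsub>C\<^esub> J s) n"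
    unfolding p_def using assms by (intro cloc_mult_mem J_inv_closed J_closed J_inv_mem J_mem) auto
  moreover have "fst p \<otimes> snd (\<one>, \<one>) = fst (\<one>, \<one>) \<otimes> snd p"
    unfolding p_def using assms by (simp add: frac_mult_def m_comm)
  ultimately show "\<exists>p\<in>(J_inv s \<otimes>\<^bsub>C\<^esub> J s) n. \<exists>q\<in>\<one>\<^bsub>C\<^esub> n. fst p \<otimes> snd q = fst q \<otimes> snd p"
    using cloc_one_mem by blast
qed (use assms in \<open>auto intro!: cloc_mult_closed J_inv_closed J_closed cloc_one_closed\<close>)

lemma J_mult_J_inv_level:
  assumes "a \<in> carrier R" "s \<in> S"
  shows "(J a \<otimes>\<^bsub>C\<^esub> J_inv s) n = cls n (a, s)"
proof -
  have "(J a \<otimes>\<^bsub>C\<^esub> J_inv s) n = cls n (frac_mult R (a, \<one>) (\<one>, s))"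
    using assms by (intro cloc_mult_level J_inv_closed J_closed J_inv_mem J_mem)
  also have "\<dots> = cls n (a, s)"
    unfolding frac_mult_def using assms one_in_S by (intro cls_eqI rel_pair_eqI) (auto intro: S_mult_closed)
  finally show ?thesis .
qed

lemma cloc_level_eq_fraction:
  assumes "x \<in> carrier C" "(a, s) \<in> x n"
  shows "x n = (J a \<otimes>\<^bsub>C\<^esub> J_inv s) n"
  using cloc_level_eq_cls[OF assms] J_mult_J_inv_level by auto

lemma cls_common_denom_add:
  "\<lbrakk>a \<in> carrier R; b \<in> carrier R; d \<in> S\<rbrakk> \<Longrightarrow> cls n (frac_add R (a, d) (b, d)) = cls n (a \<oplus> b, d)"
  unfolding frac_add_def fst_conv snd_conv
  by (intro cls_eqI rel_pair_eqI) (auto intro: S_mult_closed simp: l_distr m_assoc)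

lemma cls_zero_denom: "d \<in> S \<Longrightarrow> cls n (\<zero>, \<one>) = cls n (\<zero>, d)"
  using one_in_S by (intro cls_eqI rel_pair_eqI) auto

lemma finsum_level:
  assumes "finite K" "\<And>k. k \<in> K \<Longrightarrow> f k \<in> carrier C" "\<And>k. k \<in> K \<Longrightarrow> g k \<in> carrier R"
    "\<And>k. k \<in> K \<Longrightarrow> f k n = cls n (g k, d)" "d \<in> S"
  shows "(finsum C f K) n = cls n (finsum R g K, d)"
  using assms
proof (induction K rule: finite_induct)
  case empty
  thus ?case by (simp add: cloc_zero_eq cls_zero_denom)
next
  case (insert k K)
  hence "(finsum C f (insert k K)) n = (f k \<oplus>\<^bsub>C\<^esub> finsum C f K) n"
    by (subst cloc.finsum_insert) auto
  also have "\<dots> = cls n (frac_add R (g k, d) (finsum R g K, d))"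
    using insert by (intro cloc_add_level cloc.finsum_closed) (auto intro!: cls_self finsum_closed)
  also have "\<dots> = cls n (finsum R g (insert k K), d)"
    using insert by (simp add: cls_common_denom_add Pi_def finsum_closed)
  finally show ?case .
qed

lemma add_pow_level:
  assumes "z \<in> carrier C" "g \<in> carrier R" "d \<in> S" "z n = cls n (g, d)"
  shows "(add_pow C (N::nat) z) n = cls n (add_pow R N g, d)"
proof (induction N)
  case 0
  thus ?case using assms by (simp add: cloc_zero_eq cls_zero_denom)
next
  case (Suc N)
  have "(add_pow C (Suc N) z) n = (add_pow C N z \<oplus>\<^bsub>C\<^esub> z) n"
    by (simp add: cloc.add.nat_pow_Suc)
  also have "\<dots> = cls n (frac_add R (add_pow R N g, d) (g, d))"
    using assms Suc by (intro cloc_add_level cloc.add.nat_pow_closed) (auto intro!: cls_self add.nat_pow_closed)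
  also have "\<dots> = cls n (add_pow R (Suc N) g, d)"
    using assms by (simp add: cls_common_denom_add add.nat_pow_Suc add.nat_pow_closed)
  finally show ?case .
qed

lemma rexp_level_determined:
  assumes "rexp C T E'"
  obtains m where "\<And>x y. \<lbrakk>x \<in> carrier C; y \<in> carrier C; x m = y m\<rbrakk> \<Longrightarrow> E' x i n = E' y i n"
proof -
  interpret E': restricted_exp C T E' by unfold_locales (fact assms)
  obtain m where m: "\<And>c i. c \<in> T m \<Longrightarrow> E' c i \<in> T n" using E'.e_continuous by blast
  have "E' x i n = E' y i n" if "x \<in> carrier C" "y \<in> carrier C" "x m = y m" for x y
  proof -
    have "E' (x \<ominus>\<^bsub>C\<^esub> y) i \<in> T n" using m that diff_in_cloc_top_iff by blast
    thus ?thesis using that by (simp add: E'.e_minus E'.e_closed diff_in_cloc_top_iff)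
  qed
  thus ?thesis using that by blast
qed

end

section \<open>Extension of the exponential\<close>

locale localized_exp = completed_localization R I S + restricted_exp R I e
  for R :: "('a, 'b) ring_scheme" (structure) and I S e +
  assumes S_fixed: "S \<subseteq> fixed_elems R e"
begin

lemma S_fixed_elem: "s \<in> S \<Longrightarrow> s \<in> fixed_elems R e"
  using S_fixed by blast

lemma rel_e:
  assumes "rel m (a, s) (b, t)" "\<forall>c\<in>I m. e c i \<in> I n"
  shows "rel n (e a i, s) (e b i, t)"
proof -
  obtain u where u: "a \<in> carrier R" "s \<in> S" "b \<in> carrier R" "t \<in> S" "u \<in> S"
    "u \<otimes> (a \<otimes> t \<ominus> b \<otimes> s) \<in> I m"
    using assms(1) rel_pairE by metis
  have "e (u \<otimes> (a \<otimes> t \<ominus> b \<otimes> s)) i = u \<otimes> (e a i \<otimes> t \<ominus> e b i \<otimes> s)"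
    using u S_fixed_elem[of u] S_fixed_elem[of s] S_fixed_elem[of t]
    by (simp add: e_mult_fixed_left e_mult_fixed_right e_minus)
  thus ?thesis using u assms(2) by (intro rel_pairI[where u = u]) (auto simp: e_closed)
qed

definition e_modulus :: "nat \<Rightarrow> nat" where
  "e_modulus n = (SOME m. \<forall>c\<in>I m. \<forall>i. e c i \<in> I n)"

(* Summing makes the modulus monotone and at least n. *)
definition M :: "nat \<Rightarrow> nat" where
  "M n = n + (\<Sum>k\<le>n. e_modulus k)"

lemma le_M: "n \<le> M n"
  by (simp add: M_def)

lemma M_mono: "n \<le> n' \<Longrightarrow> M n \<le> M n'"
  unfolding M_def by (intro add_mono sum_mono2) auto

lemma M_is_modulus:
  assumes "M n \<le> m"
  shows "\<forall>c\<in>I m. e c i \<in> I n"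
proof -
  have "e_modulus n \<le> (\<Sum>k\<le>n. e_modulus k)" by (rule member_le_sum) auto
  hence "e_modulus n \<le> M n" unfolding M_def by linarith
  hence "I m \<subseteq> I (e_modulus n)" using assms I_antimono by simp
  thus ?thesis using someI_ex[OF e_continuous[of n]] unfolding e_modulus_def by blast
qed

definition loc_exp :: "(nat \<Rightarrow> ('a \<times> 'a) set) \<Rightarrow> nat \<Rightarrow> nat \<Rightarrow> ('a \<times> 'a) set" where
  "loc_exp x i = (\<lambda>n. cls n (e (fst (rep x (M n))) i, snd (rep x (M n))))"

lemma loc_exp_level:
  assumes "x \<in> carrier C" "M n \<le> k" "(a, s) \<in> x k"
  shows "loc_exp x i n = cls n (e a i, s)"
proof -
  obtain a0 s0 where r: "rep x (M n) = (a0, s0)" by fastforce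
  have "(a, s) \<in> x (M n)" using cloc_level_antimono[OF assms(1,2)] assms(3) by blast
  hence "rel (M n) (a0, s0) (a, s)"
    using cloc_level_eq_cls(1)[OF assms(1) rep_mem[OF assms(1)]] r by (simp add: cls_iff)
  hence "rel n (e a0 i, s0) (e a i, s)" using M_is_modulus by (blast intro: rel_e)
  thus ?thesis unfolding loc_exp_def r fst_conv snd_conv by (rule cls_eqI)
qed

lemma loc_exp_mem:
  assumes "x \<in> carrier C" "M n \<le> k" "(a, s) \<in> x k"
  shows "(e a i, s) \<in> loc_exp x i n"
  using cloc_level_eq_cls(2)[OF assms(1,3)] loc_exp_level[OF assms]
  by (auto intro!: cls_self e_closed)

lemma loc_exp_closed:
  assumes "x \<in> carrier C"
  shows "loc_exp x i \<in> carrier C"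
  unfolding cloc_carrier_iff
proof (intro conjI allI)
  fix n
  show "\<exists>p\<in>carrier R \<times> S. loc_exp x i n = cls n p"
    using rep_carrier[OF assms] e_closed unfolding loc_exp_def by (auto simp: mem_Times_iff)
  obtain a s where a: "(a, s) \<in> x (M (Suc n))" by (metis assms cloc_level_rep)
  have "loc_exp x i (Suc n) = cls (Suc n) (e a i, s)" "loc_exp x i n = cls n (e a i, s)"
    using loc_exp_level[OF assms _ a] M_mono[of n "Suc n"] by auto
  thus "loc_exp x i (Suc n) \<subseteq> loc_exp x i n" using cls_antimono[of n "Suc n"] by simp
qed

lemma loc_exp_tends_to_zero:
  assumes "x \<in> carrier C"
  shows "\<exists>N. \<forall>i\<ge>N. loc_exp x i \<in> T n"
proof -
  obtain a s where a: "(a, s) \<in> x (M n)" "a \<in> carrier R" "s \<in> S" by (metis assms cloc_level_rep)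
  obtain N where N: "\<forall>i\<ge>N. e a i \<in> I n" using e_tends_to_zero[OF a(2)] by blast
  have "loc_exp x i \<in> T n" if "i \<ge> N" for i
  proof -
    have "loc_exp x i n = cls n (e a i, s)" using loc_exp_level[OF assms _ a(1)] by simp
    also have "\<dots> = cls n (\<zero>, \<one>)"
      using a N that one_in_S e_closed[OF a(2)]
      by (intro cls_eqI rel_pairI[where u = \<one>]) (auto simp: minus_eq)
    finally show ?thesis using loc_exp_closed[OF assms] by (simp add: cloc_top_eq cloc_zero_eq)
  qed
  thus ?thesis by blast
qed

lemma loc_exp_add:
  assumes "x \<in> carrier C" "y \<in> carrier C"
  shows "loc_exp (x \<oplus>\<^bsub>C\<^esub> y) = (\<lambda>i. loc_exp x i \<oplus>\<^bsub>C\<^esub> loc_exp y i)"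
proof (intro ext)
  fix i n
  obtain a s b t where a: "(a, s) \<in> x (M n)" "a \<in> carrier R" "s \<in> S"
    and b: "(b, t) \<in> y (M n)" "b \<in> carrier R" "t \<in> S"
    by (metis assms cloc_level_rep)
  have "(a \<otimes> t \<oplus> b \<otimes> s, s \<otimes> t) \<in> (x \<oplus>\<^bsub>C\<^esub> y) (M n)"
    using cloc_add_mem[OF assms a(1) b(1)] by (simp add: frac_add_def)
  hence "loc_exp (x \<oplus>\<^bsub>C\<^esub> y) i n = cls n (e (a \<otimes> t \<oplus> b \<otimes> s) i, s \<otimes> t)"
    using loc_exp_level[OF cloc_add_closed[OF assms] order_refl] by simp
  also have "\<dots> = cls n (e a i \<otimes> t \<oplus> e b i \<otimes> s, s \<otimes> t)"
    using a b S_fixed_elem by (simp add: e_add e_mult_fixed_right)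
  also have "\<dots> = (loc_exp x i \<oplus>\<^bsub>C\<^esub> loc_exp y i) n"
    using cloc_add_level[OF loc_exp_closed[OF assms(1)] loc_exp_closed[OF assms(2)]
        loc_exp_mem[OF assms(1) _ a(1)] loc_exp_mem[OF assms(2) _ b(1)]]
    by (simp add: frac_add_def)
  finally show "loc_exp (x \<oplus>\<^bsub>C\<^esub> y) i n = (loc_exp x i \<oplus>\<^bsub>C\<^esub> loc_exp y i) n" .
qed

lemma loc_exp_mult:
  assumes "x \<in> carrier C" "y \<in> carrier C"
  shows "loc_exp (x \<otimes>\<^bsub>C\<^esub> y) = ser_mult C (loc_exp x) (loc_exp y)"
proof (intro ext)
  fix i n
  obtain a s b t where a: "(a, s) \<in> x (M n)" "a \<in> carrier R" "s \<in> S"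
    and b: "(b, t) \<in> y (M n)" "b \<in> carrier R" "t \<in> S"
    by (metis assms cloc_level_rep)
  have "(a \<otimes> b, s \<otimes> t) \<in> (x \<otimes>\<^bsub>C\<^esub> y) (M n)"
    using cloc_mult_mem[OF assms a(1) b(1)] by (simp add: frac_mult_def)
  hence "loc_exp (x \<otimes>\<^bsub>C\<^esub> y) i n = cls n (e (a \<otimes> b) i, s \<otimes> t)"
    using loc_exp_level[OF cloc_mult_closed[OF assms] order_refl] by simp
  also have "\<dots> = cls n (\<Oplus>k\<in>{..i}. e a k \<otimes> e b (i - k), s \<otimes> t)"
    using a b by (simp add: e_mult ser_mult_def)
  also have "\<dots> = (\<Oplus>\<^bsub>C\<^esub>k\<in>{..i}. loc_exp x k \<otimes>\<^bsub>C\<^esub> loc_exp y (i - k)) n"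
  proof (rule finsum_level[symmetric])
    fix k
    show "(loc_exp x k \<otimes>\<^bsub>C\<^esub> loc_exp y (i - k)) n = cls n (e a k \<otimes> e b (i - k), s \<otimes> t)"
      using cloc_mult_level[OF loc_exp_closed[OF assms(1)] loc_exp_closed[OF assms(2)]
          loc_exp_mem[OF assms(1) _ a(1)] loc_exp_mem[OF assms(2) _ b(1)]]
      by (simp add: frac_mult_def)
  qed (use assms a b in \<open>auto intro: S_mult_closed cloc_mult_closed loc_exp_closed e_closed\<close>)
  finally show "loc_exp (x \<otimes>\<^bsub>C\<^esub> y) i n = ser_mult C (loc_exp x) (loc_exp y) i n"
    by (simp add: ser_mult_def)
qed

lemma loc_exp_one: "loc_exp \<one>\<^bsub>C\<^esub> = (\<lambda>i. if i = 0 then \<one>\<^bsub>C\<^esub> else \<zero>\<^bsub>C\<^esub>)"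
proof (intro ext)
  fix i n
  have "loc_exp \<one>\<^bsub>C\<^esub> i n = cls n (e \<one> i, \<one>)"
    using loc_exp_level[OF cloc_one_closed order_refl cloc_one_mem] .
  thus "loc_exp \<one>\<^bsub>C\<^esub> i n = (if i = 0 then \<one>\<^bsub>C\<^esub> else \<zero>\<^bsub>C\<^esub>) n"
    by (simp add: e_one cloc_one_eq cloc_zero_eq)
qed

lemma loc_exp_continuous: "\<exists>m. \<forall>x\<in>T m. \<forall>i. loc_exp x i \<in> T n"
proof (intro exI ballI allI)
  fix x i assume "x \<in> T (M n)"
  hence x: "x \<in> carrier C" "(\<zero>, \<one>) \<in> x (M n)" using cloc_zero_mem by (auto simp: cloc_top_eq)
  hence "loc_exp x i n = cls n (e \<zero> i, \<one>)" using loc_exp_level[OF x(1) order_refl] by simp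
  thus "loc_exp x i \<in> T n" using loc_exp_closed[OF x(1)] by (simp add: e_zero cloc_top_eq cloc_zero_eq)
qed

lemma loc_exp_0:
  assumes "x \<in> carrier C"
  shows "loc_exp x 0 = x"
proof
  fix n
  obtain a s where a: "(a, s) \<in> x (M n)" "a \<in> carrier R" by (metis assms cloc_level_rep)
  hence "(a, s) \<in> x n" using cloc_level_antimono[OF assms le_M] by blast
  thus "loc_exp x 0 n = x n"
    using loc_exp_level[OF assms order_refl a(1)] cloc_level_eq_cls(1)[OF assms] a by (simp add: e_0)
qed

lemma loc_exp_cocycle:
  assumes "x \<in> carrier C"
  shows "loc_exp (loc_exp x i) j = add_pow C ((i + j) choose i) (loc_exp x (i + j))"
proof
  fix n
  obtain a s where a: "(a, s) \<in> x (M (M n))" "a \<in> carrier R" "s \<in> S" by (metis assms cloc_level_rep)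
  have "(e a i, s) \<in> loc_exp x i (M n)" using loc_exp_mem[OF assms order_refl a(1)] .
  hence "loc_exp (loc_exp x i) j n = cls n (e (e a i) j, s)"
    using loc_exp_level[OF loc_exp_closed[OF assms] order_refl] by simp
  also have "\<dots> = cls n (add_pow R ((i + j) choose i) (e a (i + j)), s)"
    using a by (simp add: e_cocycle)
  also have "\<dots> = add_pow C ((i + j) choose i) (loc_exp x (i + j)) n"
    using loc_exp_level[OF assms M_mono[OF le_M] a(1)] a
    by (intro add_pow_level[symmetric] loc_exp_closed assms e_closed)
  finally show "loc_exp (loc_exp x i) j n = add_pow C ((i + j) choose i) (loc_exp x (i + j)) n" .
qed

lemma loc_exp_rexp: "rexp C T loc_exp"
  unfolding rexp_def rser_def
  by (intro conjI ballI allI CollectI cloc_complete loc_exp_closed loc_exp_tends_to_zero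
      loc_exp_add loc_exp_mult loc_exp_one loc_exp_continuous loc_exp_0 loc_exp_cocycle)

lemma loc_exp_J:
  assumes "b \<in> carrier R"
  shows "J (e b i) = loc_exp (J b) i"
proof
  fix n
  show "J (e b i) n = loc_exp (J b) i n"
    using loc_exp_level[OF J_closed[OF assms] order_refl J_mem[OF assms]] by (simp add: cloc_j_def)
qed

lemma rexp_on_fraction:
  assumes "rexp C T E'" and E'_J: "\<forall>b\<in>carrier R. \<forall>i. J (e b i) = E' (J b) i"
    and "a \<in> carrier R" "s \<in> S"
  shows "E' (J a \<otimes>\<^bsub>C\<^esub> J_inv s) i = J (e a i) \<otimes>\<^bsub>C\<^esub> J_inv s"
proof -
  interpret E': restricted_exp C T E' by unfold_locales (fact assms)
  have Js: "J s \<in> carrier C" "J_inv s \<in> carrier C" and y: "J a \<otimes>\<^bsub>C\<^esub> J_inv s \<in> carrier C"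
    using assms by (auto intro: J_closed J_inv_closed cloc_mult_closed)
  have "E' (J s) = (\<lambda>k. if k = 0 then J s else \<zero>\<^bsub>C\<^esub>)"
  proof
    fix k
    have "E' (J s) k = J (e s k)" using E'_J assms(4) by simp
    thus "E' (J s) k = (if k = 0 then J s else \<zero>\<^bsub>C\<^esub>)"
      using S_fixed_elem[OF assms(4)] by (simp add: fixed_elems_def J_zero)
  qed
  hence "J s \<in> fixed_elems C E'" using Js by (simp add: fixed_elems_def)
  hence "E' (J a \<otimes>\<^bsub>C\<^esub> J_inv s) i \<otimes>\<^bsub>C\<^esub> J s = E' (J a \<otimes>\<^bsub>C\<^esub> J_inv s \<otimes>\<^bsub>C\<^esub> J s) i"
    using y by (simp add: E'.e_mult_fixed_right)
  also have "J a \<otimes>\<^bsub>C\<^esub> J_inv s \<otimes>\<^bsub>C\<^esub> J s = J a"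
    using assms Js J_closed by (simp add: cloc.m_assoc J_inv_mult_J)
  also have "E' (J a) i = J (e a i)"
    using E'_J assms(3) by simp
  finally have "E' (J a \<otimes>\<^bsub>C\<^esub> J_inv s) i \<otimes>\<^bsub>C\<^esub> (J s \<otimes>\<^bsub>C\<^esub> J_inv s) = J (e a i) \<otimes>\<^bsub>C\<^esub> J_inv s"
    using Js y E'.e_closed by (simp add: cloc.m_assoc[symmetric])
  thus ?thesis
    using Js y E'.e_closed J_inv_mult_J[OF assms(4)] by (simp add: cloc.m_comm)
qed

lemma rexp_extension_unique:
  assumes "rexp C T E1" "\<forall>b\<in>carrier R. \<forall>i. J (e b i) = E1 (J b) i"
    and "rexp C T E2" "\<forall>b\<in>carrier R. \<forall>i. J (e b i) = E2 (J b) i"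
    and x: "x \<in> carrier C"
  shows "E1 x = E2 x"
proof (intro ext)
  fix i n
  obtain m1 where m1: "\<And>x y. x \<in> carrier C \<Longrightarrow> y \<in> carrier C \<Longrightarrow> x m1 = y m1 \<Longrightarrow> E1 x i n = E1 y i n"
    using rexp_level_determined[OF assms(1), where i = i and n = n] by blast
  obtain m2 where m2: "\<And>x y. x \<in> carrier C \<Longrightarrow> y \<in> carrier C \<Longrightarrow> x m2 = y m2 \<Longrightarrow> E2 x i n = E2 y i n"
    using rexp_level_determined[OF assms(3), where i = i and n = n] by blast
  obtain a s where a: "(a, s) \<in> x (max m1 m2)" "a \<in> carrier R" "s \<in> S" by (metis x cloc_level_rep)
  define y where "y = J a \<otimes>\<^bsub>C\<^esub> J_inv s"
  have y: "y \<in> carrier C" unfolding y_def using a by (intro cloc_mult_closed J_closed J_inv_closed)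
  have xy: "x (max m1 m2) = y (max m1 m2)" unfolding y_def by (rule cloc_level_eq_fraction[OF x a(1)])
  have "E1 x i n = E1 y i n" by (rule m1[OF x y cloc_level_eq_mono[OF x y xy max.cobounded1]])
  moreover have "E2 x i n = E2 y i n" by (rule m2[OF x y cloc_level_eq_mono[OF x y xy max.cobounded2]])
  moreover have "E1 y i = E2 y i"
    unfolding y_def using rexp_on_fraction[OF assms(1,2) a(2,3)] rexp_on_fraction[OF assms(3,4) a(2,3)]
    by simp
  ultimately show "E1 x i n = E2 x i n" by simp
qed

end

theorem proposition2p6:
  fixes B :: "('a, 'b) ring_scheme" and I :: "nat \<Rightarrow> 'a set"
    and e :: "'a \<Rightarrow> nat \<Rightarrow> 'a" and S :: "'a set"
  assumes "complete_ring B I"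
    and "rexp B I e"
    and "S \<subseteq> fixed_elems B e"
    and "\<one>\<^bsub>B\<^esub> \<in> S"
    and "\<forall>s\<in>S. \<forall>t\<in>S. s \<otimes>\<^bsub>B\<^esub> t \<in> S"
  shows "\<exists>E. rexp (cloc B I S) (cloc_top B I S) E
           \<and> (\<forall>b\<in>carrier B. \<forall>i. cloc_j B I S (e b i) = E (cloc_j B I S b) i)
           \<and> (\<forall>E'. rexp (cloc B I S) (cloc_top B I S) E'
                   \<and> (\<forall>b\<in>carrier B. \<forall>i. cloc_j B I S (e b i) = E' (cloc_j B I S b) i)
                   \<longrightarrow> (\<forall>x\<in>carrier (cloc B I S). E' x = E x))"
proof -
  interpret localized_exp B I S e
    by (intro localized_exp.intro completed_localization.intro completed_localization_axioms.intro
        localized_exp_axioms.intro restricted_exp.intro)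
      (use assms in \<open>auto simp: complete_ring_def lin_top_ring_def fixed_elems_def\<close>)
  have agree: "\<forall>b\<in>carrier B. \<forall>i. J (e b i) = loc_exp (J b) i"
    using loc_exp_J by blast
  show ?thesis
    using loc_exp_rexp agree rexp_extension_unique[OF _ _ loc_exp_rexp agree] by blast
qed

end
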